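(* Let $G'$ be a connected graph, let $w$ be a vertex of $G'$, let $k\ge 2$, and let $G$ be obtained from $G'$ by adding $k$ new vertices, each adjacent only to $w$. Let $\Delta$ be the distance squared matrix of $G$ and $\Delta_{k+1}$ the distance squared matrix of $G'$. Then either $i_-(\Delta)=k-1+i_-(\Delta_{k+1})$ or $i_-(\Delta)=k+i_-(\Delta_{k+1})$.
   Context: For a connected graph $G$ with vertices $1,\dots,n$, the distance squared matrix $\Delta$ is the $n\times n$ matrix with $(i,j)$ entry $d_{ij}^2$, where $d_{ij}$ is the graph distance between $i$ and $j$. For a real symmetric matrix $M$, $i_-(M)$ denotes the number of negative eigenvalues of $M$ counted with multiplicity. *)

theory Defs
  imports "Jordan_Normal_Form.Char_Poly"
begin

definition simple_graph :: "nat \<Rightarrow> (nat \<Rightarrow> nat \<Rightarrow> bool) \<Rightarrow> bool" where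
  "simple_graph n E \<longleftrightarrow> (\<forall>i j. E i j \<longrightarrow> i < n \<and> j < n) \<and>
     (\<forall>i j. E i j \<longrightarrow> E j i) \<and> (\<forall>i. \<not> E i i)"

definition is_walk :: "nat \<Rightarrow> (nat \<Rightarrow> nat \<Rightarrow> bool) \<Rightarrow> nat list \<Rightarrow> bool" where
  "is_walk n E xs \<longleftrightarrow> xs \<noteq> [] \<and> (\<forall>v\<in>set xs. v < n) \<and>
     (\<forall>i. Suc i < length xs \<longrightarrow> E (xs ! i) (xs ! Suc i))"

definition connected_graph :: "nat \<Rightarrow> (nat \<Rightarrow> nat \<Rightarrow> bool) \<Rightarrow> bool" where
  "connected_graph n E \<longleftrightarrow> simple_graph n E \<and> 0 < n \<and>
     (\<forall>i<n. \<forall>j<n. \<exists>xs. is_walk n E xs \<and> hd xs = i \<and> last xs = j)"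

definition graph_dist :: "nat \<Rightarrow> (nat \<Rightarrow> nat \<Rightarrow> bool) \<Rightarrow> nat \<Rightarrow> nat \<Rightarrow> nat" where
  "graph_dist n E i j = (LEAST l. \<exists>xs. is_walk n E xs \<and> hd xs = i \<and> last xs = j \<and> length xs = Suc l)"

definition dist_sq_matrix :: "nat \<Rightarrow> (nat \<Rightarrow> nat \<Rightarrow> bool) \<Rightarrow> real mat" where
  "dist_sq_matrix n E = mat n n (\<lambda>(i, j). (real (graph_dist n E i j))^2)"

definition neg_inertia :: "real mat \<Rightarrow> nat" where
  "neg_inertia M = (\<Sum>a\<in>{a. a < 0 \<and> eigenvalue M a}. order a (char_poly M))"

definition add_pendants :: "nat \<Rightarrow> (nat \<Rightarrow> nat \<Rightarrow> bool) \<Rightarrow> nat \<Rightarrow> nat \<Rightarrow> nat \<Rightarrow> nat \<Rightarrow> bool" where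
  "add_pendants m E w k i j \<longleftrightarrow> (i < m \<and> j < m \<and> E i j) \<or>
     (i = w \<and> m \<le> j \<and> j < m + k) \<or> (j = w \<and> m \<le> i \<and> i < m + k)"

end

theory Submission
  imports Defs "Jordan_Normal_Form.Matrix_Kernel"
begin

(* Listing the old vertices first, the distance squared matrix D of the extended graph is
   [[D', b 1^T], [1 b^T, 4 (J - I)]], where D' is that of the original graph and b_i is the
   squared distance from old vertex i to any of the pendants.  Its quadratic form at (u, z) is
   u^T D' u + 2 s (b . u) + 4 (s^2 - z . z) with s = sum z.  By the spectral theorem, i_-(A) is
   both the largest dimension of a subspace on which the form of A is negative definite and the
   smallest codimension of a subspace on which it is nonnegative.  A negative subspace of D'
   together with the (k - 1)-dimensional space of pendant vectors with s = 0 gives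
   i_-(D) >= i_-(D') + k - 1; a nonnegative subspace of D' with z = 0 gives
   i_-(D) <= i_-(D') + k. *)

section \<open>Spectral theorem for real symmetric matrices\<close>

lemma real_symmetric_complex_eigenvalue_real:
  fixes A :: "real mat"
  assumes A: "A \<in> carrier_mat n n" and sym: "transpose_mat A = A"
    and v: "v \<in> carrier_vec n" "v \<noteq> 0\<^sub>v n" "map_mat complex_of_real A *\<^sub>v v = l \<cdot>\<^sub>v v"
  shows "cnj l = l"
proof -
  let ?A = "map_mat complex_of_real A"
  have cA: "?A \<in> carrier_mat n n" and symA: "transpose_mat ?A = ?A"
    using A sym by (auto simp: map_mat_transpose)
  have conj_Av: "conjugate (?A *\<^sub>v v) = ?A *\<^sub>v conjugate v"
    using cA v(1) by (intro eq_vecI) (auto simp: scalar_prod_def sum_conjugate conjugate_dist_mul)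
  have "l * (v \<bullet>c v) = (?A *\<^sub>v v) \<bullet>c v"
    using v by simp
  also have "\<dots> = (transpose_mat ?A *\<^sub>v v) \<bullet> conjugate v"
    by (simp add: symA)
  also have "\<dots> = v \<bullet> (?A *\<^sub>v conjugate v)"
    using cA v(1) by (intro transpose_vec_mult_scalar) auto
  also have "\<dots> = v \<bullet> (cnj l \<cdot>\<^sub>v conjugate v)"
    by (simp add: conj_Av[symmetric] v(3) conjugate_smult_vec)
  also have "\<dots> = cnj l * (v \<bullet>c v)"
    using v(1) by simp
  finally have "l * (v \<bullet>c v) = cnj l * (v \<bullet>c v)" .
  moreover have "v \<bullet>c v \<noteq> 0"
    using conjugate_square_eq_0_vec[OF v(1)] v(2) by simp
  ultimately show ?thesis
    by simp
qed

lemma real_symmetric_eigenvector: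
  fixes A :: "real mat"
  assumes A: "A \<in> carrier_mat n n" and sym: "transpose_mat A = A" and n: "0 < n"
  obtains r v where "v \<in> carrier_vec n" "v \<noteq> 0\<^sub>v n" "A *\<^sub>v v = r \<cdot>\<^sub>v v"
proof -
  let ?A = "map_mat complex_of_real A"
  have cA: "?A \<in> carrier_mat n n"
    using A by simp
  obtain as where cp: "char_poly ?A = (\<Prod>a\<leftarrow>as. [:- a, 1:])" and "length as = n"
    using char_poly_factorized[OF cA] by blast
  then have "hd as \<in> set as"
    using n by (cases as) auto
  then have root: "poly (char_poly ?A) (hd as) = 0"
    unfolding cp by (simp add: poly_prod_list)
  then obtain v where "v \<in> carrier_vec n" "v \<noteq> 0\<^sub>v n" "?A *\<^sub>v v = hd as \<cdot>\<^sub>v v"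
    using cA unfolding eigenvalue_root_char_poly[OF cA, symmetric] eigenvalue_def eigenvector_def
    by auto
  then have "cnj (hd as) = hd as"
    by (rule real_symmetric_complex_eigenvalue_real[OF A sym])
  then have real: "hd as = complex_of_real (Re (hd as))"
    by (metis Reals_cnj_iff of_real_Re)
  have "complex_of_real (poly (char_poly A) (Re (hd as)))
      = poly (char_poly ?A) (complex_of_real (Re (hd as)))"
    by (simp add: of_real_hom.char_poly_hom[OF A])
  then have "poly (char_poly A) (Re (hd as)) = 0"
    using root real by simp
  then have "eigenvalue A (Re (hd as))"
    using eigenvalue_root_char_poly[OF A] by simp
  then show thesis
    using that A unfolding eigenvalue_def eigenvector_def by auto
qed

text \<open>The Householder reflection \<open>I - 2 u u\<^sup>T / (u \<bullet> u)\<close>; for \<open>u = 0\<close> the junk value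
  \<open>2 / 0 = 0\<close> makes it the identity.\<close>

definition reflection_mat :: "real vec \<Rightarrow> real mat" where
  "reflection_mat u = mat (dim_vec u) (dim_vec u)
     (\<lambda>(i, j). (if i = j then 1 else 0) - 2 / (u \<bullet> u) * u $ i * u $ j)"

lemma dim_reflection_mat [simp]:
  "dim_row (reflection_mat u) = dim_vec u" "dim_col (reflection_mat u) = dim_vec u"
  by (simp_all add: reflection_mat_def)

lemma reflection_mat_orthogonal:
  "transpose_mat (reflection_mat u) * reflection_mat u = 1\<^sub>m (dim_vec u)"
proof (rule eq_matI)
  let ?n = "dim_vec u"
  define d where "d i j = (if i = j then 1 else 0 :: real)" for i j :: nat
  define \<alpha> where "\<alpha> = (\<Sum>k<?n. (u $ k)\<^sup>2)"
  define c where "c = 2 / \<alpha>"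
  have uu: "u \<bullet> u = \<alpha>"
    by (simp add: \<alpha>_def scalar_prod_def atLeast0LessThan power2_eq_square)
  have c\<alpha>: "c * c * \<alpha> = 2 * c"
    unfolding c_def by (cases "\<alpha> = 0") (auto simp: field_simps)
  have d_sum: "(\<Sum>k<?n. d k i * f k) = f i" "(\<Sum>k<?n. f k * d k i) = f i" if "i < ?n" for i f
  proof -
    have "d k i * f k = (if k = i then f k else 0)" "f k * d k i = (if k = i then f k else 0)" for k
      by (simp_all add: d_def)
    then show "(\<Sum>k<?n. d k i * f k) = f i" "(\<Sum>k<?n. f k * d k i) = f i"
      using that by simp_all
  qed
  have entry: "reflection_mat u $$ (i, j) = d i j - c * u $ i * u $ j" if "i < ?n" "j < ?n" for i j
    using that by (simp add: reflection_mat_def d_def uu c_def)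
  fix i j assume "i < dim_row (1\<^sub>m ?n)" "j < dim_col (1\<^sub>m ?n)"
  then have i: "i < ?n" and j: "j < ?n" by auto
  have "(transpose_mat (reflection_mat u) * reflection_mat u) $$ (i, j)
      = (\<Sum>k<?n. (d k i - c * u $ k * u $ i) * (d k j - c * u $ k * u $ j))"
    using i j by (simp add: entry scalar_prod_def atLeast0LessThan)
  also have "\<dots> = (\<Sum>k<?n. d k i * d k j) - c * u $ j * (\<Sum>k<?n. d k i * u $ k)
      - c * u $ i * (\<Sum>k<?n. u $ k * d k j) + c * c * u $ i * u $ j * \<alpha>"
    unfolding \<alpha>_def
    by (simp add: algebra_simps power2_eq_square sum.distrib sum_subtractf sum_distrib_left)
  also have "\<dots> = d i j + (c * c * \<alpha>) * u $ i * u $ j - 2 * c * u $ i * u $ j"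
    using d_sum[OF i] d_sum[OF j] by (simp add: algebra_simps d_def)
  also have "\<dots> = 1\<^sub>m ?n $$ (i, j)"
    using i j unfolding c\<alpha> by (simp add: d_def)
  finally show "(transpose_mat (reflection_mat u) * reflection_mat u) $$ (i, j) = 1\<^sub>m ?n $$ (i, j)" .
qed simp_all

lemma reflection_mat_first_col:
  assumes v: "v \<in> carrier_vec n" and vv: "v \<bullet> v = 1"
  shows "col (reflection_mat (v - unit_vec n 0)) 0 = v"
proof -
  have n: "0 < n"
    using v vv by (cases n) (auto simp: scalar_prod_def)
  define u where "u = v - unit_vec n 0"
  have u: "u \<in> carrier_vec n"
    using v by (simp add: u_def)
  have v_nth: "v $ i = u $ i + (if i = 0 then 1 else 0)" if "i < n" for i
    using that v by (simp add: u_def)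
  have uu: "u \<bullet> u = 2 - 2 * v $ 0"
    using v n vv unfolding u_def
    by (simp add: minus_scalar_prod_distrib[of _ n] scalar_prod_minus_distrib[of _ n])
  have col: "col (reflection_mat u) 0 $ i = (if i = 0 then 1 else 0) - (2 / (u \<bullet> u) * u $ 0) * u $ i"
    if "i < n" for i
    using that n u by (simp add: reflection_mat_def mult_ac)
  have "col (reflection_mat u) 0 = v"
  proof (rule eq_vecI)
    fix i assume "i < dim_vec v"
    then have i: "i < n"
      using v by simp
    show "col (reflection_mat u) 0 $ i = v $ i"
    proof (cases "v $ 0 = 1")
      case True
      then have "u = 0\<^sub>v n"
        using uu conjugate_square_eq_0_vec[OF u] by simp
      then have "u $ i = 0"
        using i by simp
      then show ?thesis
        using i by (simp add: col v_nth)
    next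
      case False
      then have "2 / (u \<bullet> u) * u $ 0 = -1"
        using n by (simp add: uu v_nth field_simps)
      then show ?thesis
        unfolding col[OF i] using i by (simp add: v_nth)
    qed
  qed (use u v in simp)
  then show ?thesis
    by (simp add: u_def)
qed

lemma orthogonal_mat_with_first_col:
  assumes "v \<in> carrier_vec n" "v \<bullet> v = 1"
  obtains U :: "real mat" where "U \<in> carrier_mat n n" "transpose_mat U * U = 1\<^sub>m n" "col U 0 = v"
proof (rule that)
  have "dim_vec (v - unit_vec n 0) = n"
    using assms(1) by simp
  then show "reflection_mat (v - unit_vec n 0) \<in> carrier_mat n n"
    and "transpose_mat (reflection_mat (v - unit_vec n 0)) * reflection_mat (v - unit_vec n 0) = 1\<^sub>m n"
    using reflection_mat_orthogonal[of "v - unit_vec n 0"] by auto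
qed (rule reflection_mat_first_col[OF assms])

lemma congruence_mat_index:
  assumes "A \<in> carrier_mat n n" "U \<in> carrier_mat n r" "i < r" "j < r"
  shows "(transpose_mat U * A * U) $$ (i, j) = col U i \<bullet> (A *\<^sub>v col U j)"
proof -
  have "transpose_mat U * A * U = transpose_mat U * (A * U)"
    using assms by (simp add: assoc_mult_mat[of _ r n _ n _ r])
  then show ?thesis
    using assms by (simp add: col_mult2[OF assms(1,2)] mult_mat_vec_def)
qed

lemma symmetric_first_col_eq_four_block_mat:
  assumes B: "B \<in> carrier_mat (Suc n) (Suc n)"
    and sym: "\<And>i j. i < Suc n \<Longrightarrow> j < Suc n \<Longrightarrow> B $$ (i, j) = B $$ (j, i)"
    and col0: "\<And>i. i < Suc n \<Longrightarrow> B $$ (i, 0) = (if i = 0 then r else 0)"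
  shows "B = four_block_mat (mat 1 1 (\<lambda>_. r)) (0\<^sub>m 1 n) (0\<^sub>m n 1) (mat n n (\<lambda>(i, j). B $$ (Suc i, Suc j)))"
    (is "B = ?B")
proof (rule eq_matI)
  fix i j assume "i < dim_row ?B" "j < dim_col ?B"
  then have i: "i < Suc n" and j: "j < Suc n"
    by auto
  show "B $$ (i, j) = ?B $$ (i, j)"
  proof (cases "j = 0")
    case True
    then show ?thesis
      using i col0[OF i] by simp
  next
    case False
    then show ?thesis
      using i j col0[OF j] sym[OF i j] by (cases "i = 0") auto
  qed
qed (use B in auto)

lemma orthogonal_deflation:
  fixes A U :: "real mat"
  assumes A: "A \<in> carrier_mat (Suc n) (Suc n)" and sym: "transpose_mat A = A"
    and U: "U \<in> carrier_mat (Suc n) (Suc n)" and orth: "transpose_mat U * U = 1\<^sub>m (Suc n)"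
    and eigen: "A *\<^sub>v col U 0 = r \<cdot>\<^sub>v col U 0"
  obtains A' where "A' \<in> carrier_mat n n" "transpose_mat A' = A'"
    "transpose_mat U * A * U = four_block_mat (mat 1 1 (\<lambda>_. r)) (0\<^sub>m 1 n) (0\<^sub>m n 1) A'"
proof -
  define B where "B = transpose_mat U * A * U"
  have B_sym: "B $$ (i, j) = B $$ (j, i)" if "i < Suc n" "j < Suc n" for i j
  proof -
    have "col U i \<bullet> (A *\<^sub>v col U j) = (transpose_mat A *\<^sub>v col U i) \<bullet> col U j"
      using that U A by (intro transpose_vec_mult_scalar[symmetric]) auto
    also have "\<dots> = col U j \<bullet> (A *\<^sub>v col U i)"
      using that U A unfolding sym by (intro comm_scalar_prod[of _ "Suc n"]) auto
    finally show ?thesis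
      using that unfolding B_def by (simp add: congruence_mat_index[OF A U])
  qed
  have B_col0: "B $$ (i, 0) = (if i = 0 then r else 0)" if "i < Suc n" for i
  proof -
    have "B $$ (i, 0) = col U i \<bullet> (A *\<^sub>v col U 0)"
      unfolding B_def using that by (intro congruence_mat_index[OF A U]) auto
    also have "\<dots> = r * (transpose_mat U * U) $$ (i, 0)"
      using that U by (simp add: eigen)
    finally show ?thesis
      using that unfolding orth by simp
  qed
  have "B \<in> carrier_mat (Suc n) (Suc n)"
    using A U by (simp add: B_def)
  from symmetric_first_col_eq_four_block_mat[OF this B_sym B_col0] show thesis
    by (intro that[of "mat n n (\<lambda>(i, j). B $$ (Suc i, Suc j))"])
      (auto simp: B_sym B_def[symmetric])
qed

lemma real_symmetric_deflation:
  fixes A :: "real mat"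
  assumes A: "A \<in> carrier_mat (Suc n) (Suc n)" and sym: "transpose_mat A = A"
  obtains U A' r where "U \<in> carrier_mat (Suc n) (Suc n)" "transpose_mat U * U = 1\<^sub>m (Suc n)"
    "A' \<in> carrier_mat n n" "transpose_mat A' = A'"
    "transpose_mat U * A * U = four_block_mat (mat 1 1 (\<lambda>_. r)) (0\<^sub>m 1 n) (0\<^sub>m n 1) A'"
proof -
  obtain r w where w: "w \<in> carrier_vec (Suc n)" "w \<noteq> 0\<^sub>v (Suc n)" "A *\<^sub>v w = r \<cdot>\<^sub>v w"
    using real_symmetric_eigenvector[OF A sym] by blast
  define v where "v = (1 / sqrt (w \<bullet> w)) \<cdot>\<^sub>v w"
  have "w \<bullet> w > 0"
    using conjugate_square_greater_0_vec[OF w(1)] w(2) by simp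
  then have v: "v \<in> carrier_vec (Suc n)" "v \<bullet> v = 1"
    unfolding v_def using w(1) by (auto simp: field_simps)
  have Av: "A *\<^sub>v v = r \<cdot>\<^sub>v v"
    unfolding v_def using A w by (simp add: mult_mat_vec smult_smult_assoc mult.commute)
  obtain U where U: "U \<in> carrier_mat (Suc n) (Suc n)" "transpose_mat U * U = 1\<^sub>m (Suc n)"
    and "col U 0 = v"
    using orthogonal_mat_with_first_col[OF v] by blast
  with Av have "A *\<^sub>v col U 0 = r \<cdot>\<^sub>v col U 0"
    by simp
  from orthogonal_deflation[OF A sym U this] show thesis
    using that[OF U] by blast
qed

lemma diagonal_four_block_mat:
  assumes "D' \<in> carrier_mat n n" "diagonal_mat D'"
  shows "diagonal_mat (four_block_mat (mat 1 1 (\<lambda>_. r)) (0\<^sub>m 1 n) (0\<^sub>m n 1) D')"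
  unfolding diagonal_mat_def
proof (intro allI impI)
  fix i j assume "i < dim_row (four_block_mat (mat 1 1 (\<lambda>_. r)) (0\<^sub>m 1 n) (0\<^sub>m n 1) D')"
    "j < dim_col (four_block_mat (mat 1 1 (\<lambda>_. r)) (0\<^sub>m 1 n) (0\<^sub>m n 1) D')" "i \<noteq> j"
  then show "four_block_mat (mat 1 1 (\<lambda>_. r)) (0\<^sub>m 1 n) (0\<^sub>m n 1) D' $$ (i, j) = 0"
    using assms unfolding diagonal_mat_def by auto
qed

lemma real_symmetric_orthogonally_diagonalizable:
  fixes A :: "real mat"
  assumes "A \<in> carrier_mat n n" and "transpose_mat A = A"
  shows "\<exists>Q D. Q \<in> carrier_mat n n \<and> transpose_mat Q * Q = 1\<^sub>m n \<and>
    D \<in> carrier_mat n n \<and> diagonal_mat D \<and> transpose_mat Q * A * Q = D"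
  using assms
proof (induction n arbitrary: A)
  case 0
  then show ?case
    by (intro exI[of _ "1\<^sub>m 0"] exI[of _ A]) (auto simp: diagonal_mat_def)
next
  case (Suc n)
  obtain U A' r where U: "U \<in> carrier_mat (Suc n) (Suc n)" "transpose_mat U * U = 1\<^sub>m (Suc n)"
    and A': "A' \<in> carrier_mat n n" "transpose_mat A' = A'"
    and UAU: "transpose_mat U * A * U = four_block_mat (mat 1 1 (\<lambda>_. r)) (0\<^sub>m 1 n) (0\<^sub>m n 1) A'"
    using real_symmetric_deflation[OF Suc.prems] by blast
  obtain Q' D' where Q': "Q' \<in> carrier_mat n n" "transpose_mat Q' * Q' = 1\<^sub>m n"
    and D': "D' \<in> carrier_mat n n" "diagonal_mat D'" "transpose_mat Q' * A' * Q' = D'"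
    using Suc.IH[OF A'] by blast
  define K where "K = four_block_mat (1\<^sub>m 1) (0\<^sub>m 1 n) (0\<^sub>m n 1) Q'"
  define D where "D = four_block_mat (mat 1 1 (\<lambda>_. r)) (0\<^sub>m 1 n) (0\<^sub>m n 1) D'"
  have K: "K \<in> carrier_mat (Suc n) (Suc n)"
    unfolding K_def using Q' by auto
  have KT: "transpose_mat K = four_block_mat (1\<^sub>m 1) (0\<^sub>m 1 n) (0\<^sub>m n 1) (transpose_mat Q')"
    unfolding K_def using Q' by (subst transpose_four_block_mat) auto
  have "transpose_mat (U * K) * (U * K) = transpose_mat K * (transpose_mat U * U) * K"
    using U(1) K by (simp add: transpose_mult assoc_mult_mat[of _ "Suc n" "Suc n" _ "Suc n" _ "Suc n"])
  also have "\<dots> = 1\<^sub>m (Suc n)"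
    unfolding KT U(2) unfolding K_def using Q'
    by (simp add: mult_four_block_mat[of _ 1 1 _ n _ n _ _ 1 _ n])
  finally have orth: "transpose_mat (U * K) * (U * K) = 1\<^sub>m (Suc n)" .
  have "transpose_mat (U * K) * A * (U * K) = transpose_mat K * (transpose_mat U * A * U) * K"
    using U(1) K Suc.prems(1)
    by (simp add: transpose_mult assoc_mult_mat[of _ "Suc n" "Suc n" _ "Suc n" _ "Suc n"])
  also have "\<dots> = D"
    unfolding KT UAU unfolding K_def D_def using Q' A' D'
    by (simp add: mult_four_block_mat[of _ 1 1 _ n _ n _ _ 1 _ n])
  finally have diag: "transpose_mat (U * K) * A * (U * K) = D" .
  have "D \<in> carrier_mat (Suc n) (Suc n)" "diagonal_mat D"
    unfolding D_def using D'(1) diagonal_four_block_mat[OF D'(1,2)] by auto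
  then show ?case
    using U(1) K orth diag by (intro exI[of _ "U * K"] exI[of _ D]) simp
qed

section \<open>Negative inertia and quadratic forms\<close>

lemma quadratic_form_congruence:
  fixes A W :: "'a :: comm_ring_1 mat"
  assumes A: "A \<in> carrier_mat n n" and W: "W \<in> carrier_mat n r" and c: "c \<in> carrier_vec r"
  shows "c \<bullet> ((transpose_mat W * A * W) *\<^sub>v c) = (W *\<^sub>v c) \<bullet> (A *\<^sub>v (W *\<^sub>v c))"
proof -
  have "c \<bullet> ((transpose_mat W * A * W) *\<^sub>v c) = c \<bullet> (transpose_mat W *\<^sub>v (A *\<^sub>v (W *\<^sub>v c)))"
    using A W c
    by (simp add: assoc_mult_mat[of _ r n _ n _ r] assoc_mult_mat_vec[of _ r n _ r]
        assoc_mult_mat_vec[of _ n n _ r])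
  also have "\<dots> = (transpose_mat W *\<^sub>v (A *\<^sub>v (W *\<^sub>v c))) \<bullet> c"
    using A W c by (intro comm_scalar_prod[of _ r]) auto
  also have "\<dots> = (A *\<^sub>v (W *\<^sub>v c)) \<bullet> (W *\<^sub>v c)"
    using A W c by (intro transpose_vec_mult_scalar) auto
  also have "\<dots> = (W *\<^sub>v c) \<bullet> (A *\<^sub>v (W *\<^sub>v c))"
    using A W c by (intro comm_scalar_prod[of _ n]) auto
  finally show ?thesis .
qed

text \<open>\<open>neg_definite (W\<^sup>T * A * W)\<close> says that the columns of \<open>W\<close> span a subspace of dimension
  \<open>dim_col W\<close> on which the form of \<open>A\<close> is negative definite; \<open>nonneg_on A (mat_kernel F)\<close>
  says that the form is nonnegative on a subspace of codimension at most \<open>dim_row F\<close>.\<close>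

definition neg_definite :: "real mat \<Rightarrow> bool" where
  "neg_definite M \<longleftrightarrow>
     (\<forall>c \<in> carrier_vec (dim_col M). c \<noteq> 0\<^sub>v (dim_col M) \<longrightarrow> c \<bullet> (M *\<^sub>v c) < 0)"

definition nonneg_on :: "real mat \<Rightarrow> real vec set \<Rightarrow> bool" where
  "nonneg_on A V \<longleftrightarrow> (\<forall>x \<in> V. 0 \<le> x \<bullet> (A *\<^sub>v x))"

lemma neg_definite_congruence:
  fixes A Q W :: "real mat"
  assumes A: "A \<in> carrier_mat n n" and Q: "Q \<in> carrier_mat n n" and W: "W \<in> carrier_mat n r"
    and neg: "neg_definite (transpose_mat W * (transpose_mat Q * A * Q) * W)"
  shows "neg_definite (transpose_mat (Q * W) * A * (Q * W))"
  unfolding neg_definite_def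
proof (intro ballI impI)
  fix c :: "real vec" assume "c \<in> carrier_vec (dim_col (transpose_mat (Q * W) * A * (Q * W)))"
    "c \<noteq> 0\<^sub>v (dim_col (transpose_mat (Q * W) * A * (Q * W)))"
  then have c: "c \<in> carrier_vec r" "c \<noteq> 0\<^sub>v r"
    using Q W by auto
  have QAQ: "transpose_mat Q * A * Q \<in> carrier_mat n n"
    using A Q by simp
  have "c \<bullet> ((transpose_mat (Q * W) * A * (Q * W)) *\<^sub>v c) = (Q *\<^sub>v (W *\<^sub>v c)) \<bullet> (A *\<^sub>v (Q *\<^sub>v (W *\<^sub>v c)))"
    using quadratic_form_congruence[OF A _ c(1), of "Q * W"] Q W c(1) by simp
  also have "\<dots> = c \<bullet> ((transpose_mat W * (transpose_mat Q * A * Q) * W) *\<^sub>v c)"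
    using quadratic_form_congruence[OF A Q, of "W *\<^sub>v c"] quadratic_form_congruence[OF QAQ W c(1)] W c(1)
    by simp
  also have "\<dots> < 0"
    using neg c W unfolding neg_definite_def by auto
  finally show "c \<bullet> ((transpose_mat (Q * W) * A * (Q * W)) *\<^sub>v c) < 0" .
qed

lemma nonneg_on_kernel_congruence:
  fixes A Q F :: "real mat"
  assumes A: "A \<in> carrier_mat n n" and Q: "Q \<in> carrier_mat n n" "Q * transpose_mat Q = 1\<^sub>m n"
    and F: "F \<in> carrier_mat s n" and nonneg: "nonneg_on (transpose_mat Q * A * Q) (mat_kernel F)"
  shows "nonneg_on A (mat_kernel (F * transpose_mat Q))"
  unfolding nonneg_on_def
proof
  fix x :: "real vec" assume "x \<in> mat_kernel (F * transpose_mat Q)"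
  then have x: "x \<in> carrier_vec n" "F *\<^sub>v (transpose_mat Q *\<^sub>v x) = 0\<^sub>v s"
    using Q F by (auto simp: mat_kernel_def)
  define y where "y = transpose_mat Q *\<^sub>v x"
  have y: "y \<in> mat_kernel F"
    using x Q F unfolding y_def by (auto intro: mat_kernelI)
  have "x = Q *\<^sub>v y"
    unfolding y_def using Q x by (simp flip: assoc_mult_mat_vec)
  then have "x \<bullet> (A *\<^sub>v x) = y \<bullet> ((transpose_mat Q * A * Q) *\<^sub>v y)"
    using quadratic_form_congruence[OF A Q(1), of y] y F by (auto simp: mat_kernel_def)
  also have "0 \<le> \<dots>"
    using nonneg y unfolding nonneg_on_def by blast
  finally show "0 \<le> x \<bullet> (A *\<^sub>v x)" .
qed

lemma mat_kernel_nontrivial: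
  fixes M :: "'a :: field mat"
  assumes M: "M \<in> carrier_mat s r" and sr: "s < r"
  obtains c where "c \<in> mat_kernel M" "c \<noteq> 0\<^sub>v r"
proof -
  \<comment> \<open>Padding \<open>M\<close> with zero rows gives a singular square matrix with the same kernel.\<close>
  define M' where "M' = mat r r (\<lambda>(i, j). if i < s then M $$ (i, j) else 0)"
  have M': "M' \<in> carrier_mat r r"
    unfolding M'_def by simp
  have "transpose_mat M' *\<^sub>v unit_vec r (r - 1) = 0\<^sub>v r"
    using sr unfolding M'_def
    by (intro eq_vecI) (auto simp: scalar_prod_def unit_vec_def intro!: sum.neutral)
  moreover have "unit_vec r (r - 1) $ (r - 1) = (1 :: 'a)"
    using sr by simp
  then have "unit_vec r (r - 1) \<noteq> (0\<^sub>v r :: 'a vec)"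
    using sr by (metis diff_less index_zero_vec(1) less_nat_zero_code not_gr_zero zero_neq_one)
  ultimately have "det (transpose_mat M') = 0"
    using M' by (subst det_0_iff_vec_prod_zero[of _ r]) (auto intro!: exI[of _ "unit_vec r (r - 1)"])
  then have "det M' = 0"
    using det_transpose[OF M'] by simp
  then obtain c where c: "c \<in> carrier_vec r" "c \<noteq> 0\<^sub>v r" "M' *\<^sub>v c = 0\<^sub>v r"
    using det_0_iff_vec_prod_zero[OF M'] by blast
  have "M *\<^sub>v c = 0\<^sub>v s"
  proof (rule eq_vecI)
    fix i assume "i < dim_vec (0\<^sub>v s :: 'a vec)"
    then have i: "i < s" by simp
    have "(M' *\<^sub>v c) $ i = 0"
      using c(3) i sr by simp
    then show "(M *\<^sub>v c) $ i = 0\<^sub>v s $ i"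
      using i sr M c(1) unfolding M'_def by (simp add: scalar_prod_def)
  qed (use M in simp)
  then show thesis
    using that c M by (auto intro: mat_kernelI)
qed

lemma neg_definite_dim_le:
  assumes A: "A \<in> carrier_mat n n"
    and W: "W \<in> carrier_mat n r" "neg_definite (transpose_mat W * A * W)"
    and F: "F \<in> carrier_mat s n" "nonneg_on A (mat_kernel F)"
  shows "r \<le> s"
proof (rule ccontr)
  assume "\<not> r \<le> s"
  then obtain c where c: "c \<in> mat_kernel (F * W)" "c \<noteq> 0\<^sub>v r"
    using mat_kernel_nontrivial[of "F * W" s r] F W by auto
  then have c_carrier: "c \<in> carrier_vec r" and "F *\<^sub>v (W *\<^sub>v c) = 0\<^sub>v s"
    using F W by (auto simp: mat_kernel_def)
  then have "W *\<^sub>v c \<in> mat_kernel F"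
    using F W by (auto intro: mat_kernelI)
  then have "0 \<le> (W *\<^sub>v c) \<bullet> (A *\<^sub>v (W *\<^sub>v c))"
    using F unfolding nonneg_on_def by blast
  moreover have "c \<bullet> ((transpose_mat W * A * W) *\<^sub>v c) < 0"
    using W A c c_carrier unfolding neg_definite_def by auto
  ultimately show False
    using quadratic_form_congruence[OF A W(1) c_carrier] by simp
qed

definition selection_mat :: "nat \<Rightarrow> nat list \<Rightarrow> real mat" where
  "selection_mat n idx = mat n (length idx) (\<lambda>(i, j). if i = idx ! j then 1 else 0)"

lemma selection_mat_carrier: "selection_mat n idx \<in> carrier_mat n (length idx)"
  by (simp add: selection_mat_def)

lemma selection_mat_mult_vec:
  assumes "c \<in> carrier_vec (length idx)" "i < n"
  shows "(selection_mat n idx *\<^sub>v c) $ i = (\<Sum>j<length idx. if i = idx ! j then c $ j else 0)"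
  using assms unfolding selection_mat_def
  by (auto simp: scalar_prod_def atLeast0LessThan intro!: sum.cong)

lemma selection_mat_mult_vec_nth:
  assumes "distinct idx" "set idx \<subseteq> {..<n}" "c \<in> carrier_vec (length idx)" "j < length idx"
  shows "(selection_mat n idx *\<^sub>v c) $ (idx ! j) = c $ j"
proof -
  have "idx ! j < n"
    using assms(2) nth_mem[OF assms(4)] by auto
  then have "(selection_mat n idx *\<^sub>v c) $ (idx ! j)
      = (\<Sum>j'<length idx. if idx ! j = idx ! j' then c $ j' else 0)"
    by (rule selection_mat_mult_vec[OF assms(3)])
  also have "\<dots> = (\<Sum>j'<length idx. if j' = j then c $ j' else 0)"
    using assms(1,4) by (intro sum.cong) (auto simp: nth_eq_iff_index_eq)
  finally show ?thesis
    using assms(4) by simp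
qed

lemma selection_mat_mult_vec_notin:
  assumes "c \<in> carrier_vec (length idx)" "i < n" "i \<notin> set idx"
  shows "(selection_mat n idx *\<^sub>v c) $ i = 0"
  using assms nth_mem[of _ idx] by (auto simp: selection_mat_mult_vec intro!: sum.neutral)

lemma transpose_selection_mat_mult_vec:
  assumes "y \<in> carrier_vec n" "set idx \<subseteq> {..<n}" "j < length idx"
  shows "(transpose_mat (selection_mat n idx) *\<^sub>v y) $ j = y $ (idx ! j)"
proof -
  have idx_j: "idx ! j < n"
    using assms(2) nth_mem[OF assms(3)] by auto
  have "(transpose_mat (selection_mat n idx) *\<^sub>v y) $ j = (\<Sum>i<n. (if i = idx ! j then 1 else 0) * y $ i)"
    using assms unfolding selection_mat_def by (simp add: scalar_prod_def atLeast0LessThan)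
  also have "\<dots> = (\<Sum>i<n. if i = idx ! j then y $ i else 0)"
    by (intro sum.cong) auto
  finally show ?thesis
    using idx_j by simp
qed

lemma diagonal_mat_mult_vec:
  assumes D: "D \<in> carrier_mat n n" "diagonal_mat D" and y: "y \<in> carrier_vec n"
  shows "D *\<^sub>v y = vec n (\<lambda>i. D $$ (i, i) * y $ i)"
proof (rule eq_vecI)
  fix i assume "i < dim_vec (vec n (\<lambda>i. D $$ (i, i) * y $ i))"
  then have i: "i < n" by simp
  have "(D *\<^sub>v y) $ i = (\<Sum>j<n. D $$ (i, j) * y $ j)"
    using D y i by (simp add: scalar_prod_def atLeast0LessThan)
  also have "\<dots> = (\<Sum>j<n. if j = i then D $$ (i, i) * y $ i else 0)"
    using D i unfolding diagonal_mat_def by (intro sum.cong) auto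
  finally show "(D *\<^sub>v y) $ i = vec n (\<lambda>i. D $$ (i, i) * y $ i) $ i"
    using i by simp
qed (use D in simp)

lemma diagonal_quadratic_form:
  fixes D :: "'a :: comm_ring_1 mat"
  assumes D: "D \<in> carrier_mat n n" "diagonal_mat D" and y: "y \<in> carrier_vec n"
  shows "y \<bullet> (D *\<^sub>v y) = (\<Sum>i<n. D $$ (i, i) * (y $ i)\<^sup>2)"
  using y by (simp add: diagonal_mat_mult_vec[OF D y] scalar_prod_def atLeast0LessThan
      power2_eq_square mult_ac)

lemma diagonal_quadratic_form_selection:
  fixes D :: "real mat"
  assumes D: "D \<in> carrier_mat n n" "diagonal_mat D"
    and idx: "distinct idx" "set idx \<subseteq> {..<n}" and c: "c \<in> carrier_vec (length idx)"
  shows "c \<bullet> ((transpose_mat (selection_mat n idx) * D * selection_mat n idx) *\<^sub>v c)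
    = (\<Sum>j<length idx. D $$ (idx ! j, idx ! j) * (c $ j)\<^sup>2)"
proof -
  let ?y = "selection_mat n idx *\<^sub>v c"
  have "c \<bullet> ((transpose_mat (selection_mat n idx) * D * selection_mat n idx) *\<^sub>v c)
      = (\<Sum>i<n. D $$ (i, i) * (?y $ i)\<^sup>2)"
    using quadratic_form_congruence[OF D(1) selection_mat_carrier c] diagonal_quadratic_form[OF D]
      selection_mat_carrier[of n idx] c by simp
  also have "\<dots> = (\<Sum>i\<in>set idx. D $$ (i, i) * (?y $ i)\<^sup>2)"
    using idx(2) selection_mat_mult_vec_notin[OF c] by (intro sum.mono_neutral_right) auto
  also have "\<dots> = (\<Sum>j<length idx. D $$ (idx ! j, idx ! j) * (?y $ (idx ! j))\<^sup>2)"
    by (rule sum.reindex_bij_betw[OF bij_betw_nth[OF idx(1) refl refl], symmetric])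
  also have "\<dots> = (\<Sum>j<length idx. D $$ (idx ! j, idx ! j) * (c $ j)\<^sup>2)"
    using selection_mat_mult_vec_nth[OF idx c] by simp
  finally show ?thesis .
qed

lemma diagonal_neg_witness:
  fixes D :: "real mat"
  assumes D: "D \<in> carrier_mat n n" "diagonal_mat D"
  defines "idx \<equiv> filter (\<lambda>i. D $$ (i, i) < 0) [0..<n]"
  shows "neg_definite (transpose_mat (selection_mat n idx) * D * selection_mat n idx)"
    and "nonneg_on D (mat_kernel (transpose_mat (selection_mat n idx)))"
proof -
  have idx: "distinct idx" "set idx \<subseteq> {..<n}" and idx_set: "set idx = {i. i < n \<and> D $$ (i, i) < 0}"
    by (auto simp: idx_def)
  show "neg_definite (transpose_mat (selection_mat n idx) * D * selection_mat n idx)"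
    unfolding neg_definite_def
  proof (intro ballI impI)
    fix c :: "real vec"
    assume "c \<in> carrier_vec (dim_col (transpose_mat (selection_mat n idx) * D * selection_mat n idx))"
      "c \<noteq> 0\<^sub>v (dim_col (transpose_mat (selection_mat n idx) * D * selection_mat n idx))"
    then have c: "c \<in> carrier_vec (length idx)" "c \<noteq> 0\<^sub>v (length idx)"
      by (auto simp: selection_mat_def)
    obtain j where j: "j < length idx" "c $ j \<noteq> 0"
      using c by (metis eq_vecI carrier_vecD index_zero_vec)
    have neg: "D $$ (idx ! j', idx ! j') < 0" if "j' < length idx" for j'
      using nth_mem[OF that] idx_set by auto
    have "0 < (\<Sum>j'<length idx. - D $$ (idx ! j', idx ! j') * (c $ j')\<^sup>2)"
      using j neg by (intro sum_pos2[of _ j]) (auto simp: mult_less_0_iff mult_le_0_iff less_imp_le)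
    then show "c \<bullet> ((transpose_mat (selection_mat n idx) * D * selection_mat n idx) *\<^sub>v c) < 0"
      unfolding diagonal_quadratic_form_selection[OF D idx c(1)] by (simp add: sum_negf)
  qed
  show "nonneg_on D (mat_kernel (transpose_mat (selection_mat n idx)))"
    unfolding nonneg_on_def
  proof
    fix y :: "real vec" assume "y \<in> mat_kernel (transpose_mat (selection_mat n idx))"
    then have y: "y \<in> carrier_vec n" "transpose_mat (selection_mat n idx) *\<^sub>v y = 0\<^sub>v (length idx)"
      by (auto simp: mat_kernel_def selection_mat_def)
    have "y $ i = 0" if "i \<in> set idx" for i
      using that y transpose_selection_mat_mult_vec[OF y(1) idx(2)]
      by (metis in_set_conv_nth index_zero_vec(1))
    then have "0 \<le> D $$ (i, i) * (y $ i)\<^sup>2" if "i < n" for i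
      using that idx_set by (cases "D $$ (i, i) < 0") auto
    then show "0 \<le> y \<bullet> (D *\<^sub>v y)"
      using diagonal_quadratic_form[OF D y(1)] by (auto intro!: sum_nonneg)
  qed
qed

lemma order_prod_linear_factors:
  fixes a :: "'a :: idom"
  shows "Polynomial.order a (\<Prod>x\<leftarrow>xs. [:- x, 1:]) = count_list xs a"
proof (induction xs)
  case Nil
  then show ?case by (simp add: order_0I)
next
  case (Cons x xs)
  have "(\<Prod>x\<leftarrow>xs. [:- x, 1:]) \<noteq> 0"
    by auto
  then have "Polynomial.order a ([:- x, 1:] * (\<Prod>x\<leftarrow>xs. [:- x, 1:]))
      = Polynomial.order a [:- x, 1:] + Polynomial.order a (\<Prod>x\<leftarrow>xs. [:- x, 1:])"
    by (intro order_mult no_zero_divisors) simp_all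
  then show ?case
    using Cons by (simp add: order_linear')
qed

lemma neg_inertia_similar:
  assumes "A \<in> carrier_mat n n" "B \<in> carrier_mat n n" "similar_mat A B"
  shows "neg_inertia A = neg_inertia B"
  unfolding neg_inertia_def eigenvalue_root_char_poly[OF assms(1)] eigenvalue_root_char_poly[OF assms(2)]
    char_poly_similar[OF assms(3)] ..

lemma neg_inertia_diagonal:
  assumes D: "D \<in> carrier_mat n n" "diagonal_mat D"
  shows "neg_inertia D = length (filter (\<lambda>i. D $$ (i, i) < 0) [0..<n])"
proof -
  define ds where "ds = diag_mat D"
  have ds: "ds = map (\<lambda>i. D $$ (i, i)) [0..<n]"
    using D by (simp add: ds_def diag_mat_def)
  have cp: "char_poly D = (\<Prod>x\<leftarrow>ds. [:- x, 1:])"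
    unfolding ds_def using D
    by (intro char_poly_upper_triangular) (auto simp: upper_triangular_def diagonal_mat_def)
  have "{a. a < 0 \<and> eigenvalue D a} = set (filter (\<lambda>x. x < 0) ds)"
    unfolding eigenvalue_root_char_poly[OF D(1)] cp
    by (auto simp: poly_prod_list)
  moreover have "count_list ds a = count_list (filter (\<lambda>x. x < 0) ds) a" if "a < 0" for a
    using that by (induction ds) auto
  ultimately have "neg_inertia D
      = sum (count_list (filter (\<lambda>x. x < 0) ds)) (set (filter (\<lambda>x. x < 0) ds))"
    unfolding neg_inertia_def cp order_prod_linear_factors by (intro sum.cong) auto
  also have "\<dots> = length (filter (\<lambda>x. x < 0) ds)"
    by (rule sum_count_set) auto
  finally show ?thesis
    unfolding ds by (simp add: filter_map comp_def)
qed

lemma neg_inertia_witnesses: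
  fixes A :: "real mat"
  assumes A: "A \<in> carrier_mat n n" and sym: "transpose_mat A = A"
  obtains W F where "W \<in> carrier_mat n (neg_inertia A)" "neg_definite (transpose_mat W * A * W)"
    and "F \<in> carrier_mat (neg_inertia A) n" "nonneg_on A (mat_kernel F)"
proof -
  obtain Q D where Q: "Q \<in> carrier_mat n n" "transpose_mat Q * Q = 1\<^sub>m n"
    and D: "D \<in> carrier_mat n n" "diagonal_mat D" and QAQ: "transpose_mat Q * A * Q = D"
    using real_symmetric_orthogonally_diagonalizable[OF A sym] by blast
  have QQ: "Q * transpose_mat Q = 1\<^sub>m n"
    using mat_mult_left_right_inverse[OF _ Q(1) Q(2)] Q(1) by simp
  have "Q * D * transpose_mat Q = Q * transpose_mat Q * A * (Q * transpose_mat Q)"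
    unfolding QAQ[symmetric] using Q(1) A by (simp add: assoc_mult_mat[of _ n n _ n _ n])
  then have "A = Q * D * transpose_mat Q"
    using A unfolding QQ by simp
  then have "similar_mat A D"
    unfolding similar_mat_def similar_mat_wit_def using Q QQ D A
    by (intro exI[of _ Q] exI[of _ "transpose_mat Q"]) (auto simp: Let_def)
  then have inertia: "neg_inertia A = length (filter (\<lambda>i. D $$ (i, i) < 0) [0..<n])"
    using neg_inertia_similar[OF A D(1)] neg_inertia_diagonal[OF D] by simp
  define E where "E = selection_mat n (filter (\<lambda>i. D $$ (i, i) < 0) [0..<n])"
  have E: "E \<in> carrier_mat n (neg_inertia A)"
    unfolding E_def inertia by (rule selection_mat_carrier)
  show thesis
  proof (rule that)
    show "Q * E \<in> carrier_mat n (neg_inertia A)" "transpose_mat E * transpose_mat Q \<in> carrier_mat (neg_inertia A) n"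
      using Q E by auto
    show "neg_definite (transpose_mat (Q * E) * A * (Q * E))"
      using neg_definite_congruence[OF A Q(1) E] diagonal_neg_witness(1)[OF D] QAQ by (simp add: E_def)
    show "nonneg_on A (mat_kernel (transpose_mat E * transpose_mat Q))"
      using nonneg_on_kernel_congruence[OF A Q(1) QQ, of "transpose_mat E"] diagonal_neg_witness(2)[OF D] QAQ E
      by (simp add: E_def)
  qed
qed

lemma neg_inertia_ge:
  fixes A :: "real mat"
  assumes "A \<in> carrier_mat n n" "transpose_mat A = A"
    and "W \<in> carrier_mat n r" "neg_definite (transpose_mat W * A * W)"
  shows "r \<le> neg_inertia A"
  using neg_inertia_witnesses[OF assms(1,2)] neg_definite_dim_le[OF assms(1,3,4)] by metis

lemma neg_inertia_le:
  fixes A :: "real mat"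
  assumes "A \<in> carrier_mat n n" "transpose_mat A = A"
    and "F \<in> carrier_mat s n" "nonneg_on A (mat_kernel F)"
  shows "neg_inertia A \<le> s"
  using neg_inertia_witnesses[OF assms(1,2)] neg_definite_dim_le[OF assms(1) _ _ assms(3,4)] by metis

section \<open>Pendant block matrices\<close>

text \<open>\<open>pendant_block_mat A b k c\<close> is \<open>[[A, b 1\<^sup>T], [1 b\<^sup>T, c (J - I)]]\<close>; with \<open>c = 4\<close> it is the
  distance squared matrix after attaching \<open>k\<close> pendant vertices to a common vertex.\<close>

definition pendant_block_mat :: "real mat \<Rightarrow> real vec \<Rightarrow> nat \<Rightarrow> real \<Rightarrow> real mat" where
  "pendant_block_mat A b k c = four_block_mat A
     (mat (dim_row A) k (\<lambda>(i, _). b $ i)) (mat k (dim_row A) (\<lambda>(_, j). b $ j))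
     (mat k k (\<lambda>(i, j). if i = j then 0 else c))"

lemma pendant_block_mat_carrier:
  "A \<in> carrier_mat m m \<Longrightarrow> pendant_block_mat A b k c \<in> carrier_mat (m + k) (m + k)"
  unfolding pendant_block_mat_def by auto

lemma pendant_block_mat_symmetric:
  assumes "A \<in> carrier_mat m m" "transpose_mat A = A"
  shows "transpose_mat (pendant_block_mat A b k c) = pendant_block_mat A b k c"
  using assms unfolding pendant_block_mat_def
  by (subst transpose_four_block_mat[of _ m m _ k _ k]) auto

lemma pendant_block_quadratic_form:
  assumes A: "A \<in> carrier_mat m m" and b: "b \<in> carrier_vec m"
    and u: "u \<in> carrier_vec m" and z: "z \<in> carrier_vec k"
  defines "s \<equiv> (\<Sum>i<k. z $ i)"
  shows "(u @\<^sub>v z) \<bullet> (pendant_block_mat A b k c *\<^sub>v (u @\<^sub>v z))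
    = u \<bullet> (A *\<^sub>v u) + 2 * s * (b \<bullet> u) + c * (s\<^sup>2 - z \<bullet> z)"
proof -
  have upper_right: "mat m k (\<lambda>(i, _). b $ i) *\<^sub>v z = s \<cdot>\<^sub>v b"
    using b z by (intro eq_vecI) (auto simp: s_def scalar_prod_def atLeast0LessThan sum_distrib_left mult.commute)
  have lower_left: "mat k m (\<lambda>(_, j). b $ j) *\<^sub>v u = vec k (\<lambda>_. b \<bullet> u)"
    using b u by (intro eq_vecI) (auto simp: scalar_prod_def)
  have lower_right: "mat k k (\<lambda>(i, j). if i = j then 0 else c) *\<^sub>v z = vec k (\<lambda>i. c * (s - z $ i))"
  proof (rule eq_vecI)
    fix i assume "i < dim_vec (vec k (\<lambda>i. c * (s - z $ i)))"
    then have i: "i < k" by simp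
    have "(if i = j then 0 else c) * z $ j = c * z $ j - (if j = i then c * z $ i else 0)" for j
      by simp
    then have "(\<Sum>j<k. (if i = j then 0 else c) * z $ j) = (\<Sum>j<k. c * z $ j) - c * z $ i"
      using i by (simp add: sum_subtractf)
    then show "(mat k k (\<lambda>(i, j). if i = j then 0 else c) *\<^sub>v z) $ i = vec k (\<lambda>i. c * (s - z $ i)) $ i"
      using i z by (simp add: s_def scalar_prod_def atLeast0LessThan sum_distrib_left algebra_simps)
  qed simp
  have "z \<bullet> (vec k (\<lambda>_. \<beta>) + vec k (\<lambda>i. c * (s - z $ i))) = s * \<beta> + c * (s\<^sup>2 - z \<bullet> z)" for \<beta>
    using z by (simp add: s_def scalar_prod_def atLeast0LessThan sum.distrib sum_distrib_left
        sum_distrib_right sum_subtractf algebra_simps power2_eq_square)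
  moreover have "u \<bullet> (A *\<^sub>v u + s \<cdot>\<^sub>v b) = u \<bullet> (A *\<^sub>v u) + s * (b \<bullet> u)"
    using A b u by (simp add: scalar_prod_add_distrib[of _ m] comm_scalar_prod[of u m b])
  ultimately show ?thesis
    unfolding pendant_block_mat_def using A b u z
    by (simp add: four_block_mat_mult_vec[of _ m m _ k _ k] upper_right lower_left lower_right
        scalar_prod_append[of _ m _ k])
qed

lemma pendant_block_quadratic_form_zero_sum:
  assumes "A \<in> carrier_mat m m" "b \<in> carrier_vec m" "u \<in> carrier_vec m" "z \<in> carrier_vec k"
    and "(\<Sum>i<k. z $ i) = 0"
  shows "(u @\<^sub>v z) \<bullet> (pendant_block_mat A b k c *\<^sub>v (u @\<^sub>v z)) = u \<bullet> (A *\<^sub>v u) - c * (z \<bullet> z)"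
  using pendant_block_quadratic_form[OF assms(1-4)] assms(5) by simp

text \<open>The columns \<open>e\<^sub>j - e\<^bsub>k - 1\<^esub>\<close> for \<open>j < k - 1\<close> form a basis of the zero-sum vectors in \<open>\<real>\<^sup>k\<close>.\<close>

definition zero_sum_basis_mat :: "nat \<Rightarrow> real mat" where
  "zero_sum_basis_mat k = mat k (k - 1) (\<lambda>(i, j). if i = j then 1 else if i = k - 1 then -1 else 0)"

lemma zero_sum_basis_mat_carrier: "zero_sum_basis_mat k \<in> carrier_mat k (k - 1)"
  by (simp add: zero_sum_basis_mat_def)

lemma zero_sum_basis_mat_mult_vec:
  assumes y: "y \<in> carrier_vec (k - 1)"
  shows "zero_sum_basis_mat k *\<^sub>v y = vec k (\<lambda>i. if i < k - 1 then y $ i else - (\<Sum>j<k - 1. y $ j))"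
proof (rule eq_vecI)
  fix i assume "i < dim_vec (vec k (\<lambda>i. if i < k - 1 then y $ i else - (\<Sum>j<k - 1. y $ j)))"
  then have i: "i < k" by simp
  have "(zero_sum_basis_mat k *\<^sub>v y) $ i
      = (\<Sum>j<k - 1. (if i = j then 1 else if i = k - 1 then -1 else 0) * y $ j)"
    using i y unfolding zero_sum_basis_mat_def by (simp add: scalar_prod_def atLeast0LessThan)
  also have "\<dots> = (if i < k - 1 then y $ i else - (\<Sum>j<k - 1. y $ j))"
  proof (cases "i < k - 1")
    case True
    then have "(\<Sum>j<k - 1. (if i = j then 1 else if i = k - 1 then -1 else 0) * y $ j)
        = (\<Sum>j<k - 1. if j = i then y $ i else 0)"
      by (intro sum.cong) auto
    then show ?thesis
      using True by simp
  next
    case False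
    then have "(\<Sum>j<k - 1. (if i = j then 1 else if i = k - 1 then -1 else 0) * y $ j)
        = (\<Sum>j<k - 1. - y $ j)"
      using i by (intro sum.cong) auto
    then show ?thesis
      using False by (simp add: sum_negf)
  qed
  finally show "(zero_sum_basis_mat k *\<^sub>v y) $ i
      = vec k (\<lambda>i. if i < k - 1 then y $ i else - (\<Sum>j<k - 1. y $ j)) $ i"
    using i by simp
qed (simp add: zero_sum_basis_mat_def)

lemma sum_zero_sum_basis_mat_mult_vec:
  assumes "y \<in> carrier_vec (k - 1)"
  shows "(\<Sum>i<k. (zero_sum_basis_mat k *\<^sub>v y) $ i) = 0"
proof (cases k)
  case (Suc k')
  then show ?thesis
    using assms by (simp add: zero_sum_basis_mat_mult_vec)
qed simp

lemma zero_sum_basis_mat_mult_vec_eq_0_iff: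
  assumes y: "y \<in> carrier_vec (k - 1)"
  shows "zero_sum_basis_mat k *\<^sub>v y = 0\<^sub>v k \<longleftrightarrow> y = 0\<^sub>v (k - 1)"
proof
  assume P: "zero_sum_basis_mat k *\<^sub>v y = 0\<^sub>v k"
  have "y $ j = 0" if j: "j < k - 1" for j
  proof -
    have "y $ j = (zero_sum_basis_mat k *\<^sub>v y) $ j"
      using j by (simp add: zero_sum_basis_mat_mult_vec[OF y])
    also have "\<dots> = 0"
      using j by (simp add: P)
    finally show ?thesis .
  qed
  then show "y = 0\<^sub>v (k - 1)"
    using y by auto
next
  assume "y = 0\<^sub>v (k - 1)"
  then show "zero_sum_basis_mat k *\<^sub>v y = 0\<^sub>v k"
    by (intro eq_vecI) (auto simp: zero_sum_basis_mat_def scalar_prod_def)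
qed

lemma zero_mat_mult_vec [simp]:
  "v \<in> carrier_vec k \<Longrightarrow> 0\<^sub>m n k *\<^sub>v v = (0\<^sub>v n :: 'a :: semiring_0 vec)"
  by (intro eq_vecI) (auto simp: scalar_prod_def)

lemma four_block_diag_mult_append_vec:
  fixes X Y :: "'a :: semiring_1 mat"
  assumes "X \<in> carrier_mat p q" "Y \<in> carrier_mat p' q'" "u \<in> carrier_vec q" "z \<in> carrier_vec q'"
  shows "four_block_mat X (0\<^sub>m p q') (0\<^sub>m p' q) Y *\<^sub>v (u @\<^sub>v z) = (X *\<^sub>v u) @\<^sub>v (Y *\<^sub>v z)"
  using assms by (simp add: four_block_mat_mult_vec[of _ p q _ q' _ p'])

lemma neg_inertia_pendant_block_le:
  assumes A: "A \<in> carrier_mat m m" "transpose_mat A = A" and b: "b \<in> carrier_vec m"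
  shows "neg_inertia (pendant_block_mat A b k c) \<le> neg_inertia A + k"
proof -
  let ?a = "neg_inertia A"
  obtain F' where F': "F' \<in> carrier_mat ?a m" "nonneg_on A (mat_kernel F')"
    using neg_inertia_witnesses[OF A] by metis
  define F where "F = four_block_mat F' (0\<^sub>m ?a k) (0\<^sub>m k m) (1\<^sub>m k)"
  have F: "F \<in> carrier_mat (?a + k) (m + k)"
    unfolding F_def using F' by auto
  have "nonneg_on (pendant_block_mat A b k c) (mat_kernel F)"
    unfolding nonneg_on_def
  proof
    fix x :: "real vec" assume "x \<in> mat_kernel F"
    then have x: "x \<in> carrier_vec (m + k)" "F *\<^sub>v x = 0\<^sub>v (?a + k)"
      using F by (auto simp: mat_kernel_def)
    define u where "u = vec_first x m"
    define z where "z = vec_last x k"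
    have x_split: "x = u @\<^sub>v z"
      unfolding u_def z_def using x(1) by simp
    have "(F' *\<^sub>v u) @\<^sub>v z = F *\<^sub>v x"
      unfolding x_split F_def using F' by (simp add: four_block_diag_mult_append_vec u_def z_def)
    also have "\<dots> = 0\<^sub>v ?a @\<^sub>v 0\<^sub>v k"
      using x(2) by auto
    finally have "F' *\<^sub>v u = 0\<^sub>v ?a \<and> z = 0\<^sub>v k"
      using append_vec_eq[of "F' *\<^sub>v u" ?a "0\<^sub>v ?a"] F' by (simp add: u_def)
    then have "u \<in> mat_kernel F'" and z: "z = 0\<^sub>v k"
      using F' by (auto intro!: mat_kernelI simp: u_def)
    then have "0 \<le> u \<bullet> (A *\<^sub>v u)"
      using F'(2) unfolding nonneg_on_def by blast
    then show "0 \<le> x \<bullet> (pendant_block_mat A b k c *\<^sub>v x)"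
      unfolding x_split z using pendant_block_quadratic_form_zero_sum[OF A(1) b] by (simp add: u_def)
  qed
  then show ?thesis
    using neg_inertia_le[OF pendant_block_mat_carrier[OF A(1)] pendant_block_mat_symmetric[OF A] F] by simp
qed

lemma neg_definite_of_split_form:
  fixes M N L :: "real mat"
  assumes M: "M \<in> carrier_mat (p + q) (p + q)" and N: "N \<in> carrier_mat p p" "neg_definite N"
    and L: "L \<in> carrier_mat s q" "\<And>z. z \<in> carrier_vec q \<Longrightarrow> L *\<^sub>v z = 0\<^sub>v s \<Longrightarrow> z = 0\<^sub>v q"
    and c: "0 < c"
    and form: "\<And>u z. u \<in> carrier_vec p \<Longrightarrow> z \<in> carrier_vec q \<Longrightarrow>
      (u @\<^sub>v z) \<bullet> (M *\<^sub>v (u @\<^sub>v z)) = u \<bullet> (N *\<^sub>v u) - c * ((L *\<^sub>v z) \<bullet> (L *\<^sub>v z))"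
  shows "neg_definite M"
  unfolding neg_definite_def
proof (intro ballI impI)
  fix x :: "real vec" assume "x \<in> carrier_vec (dim_col M)" "x \<noteq> 0\<^sub>v (dim_col M)"
  then have x: "x \<in> carrier_vec (p + q)" "x \<noteq> 0\<^sub>v (p + q)"
    using M by auto
  define u where "u = vec_first x p"
  define z where "z = vec_last x q"
  have u: "u \<in> carrier_vec p" and z: "z \<in> carrier_vec q" and x_split: "x = u @\<^sub>v z"
    unfolding u_def z_def using x(1) by simp_all
  have Lz: "L *\<^sub>v z \<in> carrier_vec s"
    using L(1) z by simp
  have "0 \<le> (L *\<^sub>v z) \<bullet> (L *\<^sub>v z)"
    using conjugate_square_ge_0_vec[of "L *\<^sub>v z"] by simp
  then have Lz_nonneg: "0 \<le> c * ((L *\<^sub>v z) \<bullet> (L *\<^sub>v z))"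
    using c by simp
  have "0\<^sub>v (p + q) = 0\<^sub>v p @\<^sub>v (0\<^sub>v q :: real vec)"
    by (intro eq_vecI) auto
  then consider "u \<noteq> 0\<^sub>v p" | "u = 0\<^sub>v p" "z \<noteq> 0\<^sub>v q"
    using x(2) unfolding x_split by auto
  then show "x \<bullet> (M *\<^sub>v x) < 0"
  proof cases
    case 1
    then have "u \<bullet> (N *\<^sub>v u) < 0"
      using N u unfolding neg_definite_def by auto
    then show ?thesis
      unfolding x_split form[OF u z] using Lz_nonneg by linarith
  next
    case 2
    then have "0 < (L *\<^sub>v z) \<bullet> (L *\<^sub>v z)"
      using conjugate_square_greater_0_vec[OF Lz] L(2)[OF z] by auto
    moreover have "u \<bullet> (N *\<^sub>v u) = 0"
      using 2(1) N by simp
    ultimately show ?thesis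
      unfolding x_split form[OF u z] using c by simp
  qed
qed

lemma neg_inertia_pendant_block_ge:
  assumes A: "A \<in> carrier_mat m m" "transpose_mat A = A" and b: "b \<in> carrier_vec m"
    and c: "0 < c"
  shows "neg_inertia A + (k - 1) \<le> neg_inertia (pendant_block_mat A b k c)"
proof -
  let ?a = "neg_inertia A" and ?P = "zero_sum_basis_mat k" and ?\<Delta> = "pendant_block_mat A b k c"
  obtain W' where W': "W' \<in> carrier_mat m ?a" "neg_definite (transpose_mat W' * A * W')"
    using neg_inertia_witnesses[OF A] by metis
  define W where "W = four_block_mat W' (0\<^sub>m m (k - 1)) (0\<^sub>m k ?a) ?P"
  have W: "W \<in> carrier_mat (m + k) (?a + (k - 1))"
    unfolding W_def using W' zero_sum_basis_mat_carrier[of k] by auto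
  have "neg_definite (transpose_mat W * ?\<Delta> * W)"
  proof (rule neg_definite_of_split_form[OF _ _ W'(2) zero_sum_basis_mat_carrier _ c])
    fix u z :: "real vec" assume u: "u \<in> carrier_vec ?a" and z: "z \<in> carrier_vec (k - 1)"
    have "(u @\<^sub>v z) \<bullet> ((transpose_mat W * ?\<Delta> * W) *\<^sub>v (u @\<^sub>v z))
        = ((W' *\<^sub>v u) @\<^sub>v (?P *\<^sub>v z)) \<bullet> (?\<Delta> *\<^sub>v ((W' *\<^sub>v u) @\<^sub>v (?P *\<^sub>v z)))"
      using quadratic_form_congruence[OF pendant_block_mat_carrier[OF A(1)] W, of "u @\<^sub>v z"] u z
      unfolding W_def four_block_diag_mult_append_vec[OF W'(1) zero_sum_basis_mat_carrier u z] by simp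
    also have "\<dots> = (W' *\<^sub>v u) \<bullet> (A *\<^sub>v (W' *\<^sub>v u)) - c * ((?P *\<^sub>v z) \<bullet> (?P *\<^sub>v z))"
      using W'(1) u zero_sum_basis_mat_carrier[of k] z
      by (intro pendant_block_quadratic_form_zero_sum[OF A(1) b] sum_zero_sum_basis_mat_mult_vec) auto
    also have "(W' *\<^sub>v u) \<bullet> (A *\<^sub>v (W' *\<^sub>v u)) = u \<bullet> ((transpose_mat W' * A * W') *\<^sub>v u)"
      using quadratic_form_congruence[OF A(1) W'(1) u] by simp
    finally show "(u @\<^sub>v z) \<bullet> ((transpose_mat W * ?\<Delta> * W) *\<^sub>v (u @\<^sub>v z))
        = u \<bullet> ((transpose_mat W' * A * W') *\<^sub>v u) - c * ((?P *\<^sub>v z) \<bullet> (?P *\<^sub>v z))" .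
  qed (use W W' A(1) zero_sum_basis_mat_mult_vec_eq_0_iff in auto)
  then show ?thesis
    using neg_inertia_ge[OF pendant_block_mat_carrier[OF A(1)] pendant_block_mat_symmetric[OF A] W]
    by simp
qed

section \<open>Distances in a graph with pendant vertices\<close>

lemma is_walk_iff_successively:
  "is_walk n E xs \<longleftrightarrow> xs \<noteq> [] \<and> set xs \<subseteq> {..<n} \<and> successively E xs"
  unfolding is_walk_def successively_conv_nth by auto

lemma graph_dist_eqI:
  assumes to': "\<And>xs. is_walk n E xs \<Longrightarrow> hd xs = i \<Longrightarrow> last xs = j \<Longrightarrow>
      \<exists>ys. is_walk n' E' ys \<and> hd ys = i' \<and> last ys = j' \<and> length ys \<le> length xs"
    and from': "\<And>ys. is_walk n' E' ys \<Longrightarrow> hd ys = i' \<Longrightarrow> last ys = j' \<Longrightarrow>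
      \<exists>xs. is_walk n E xs \<and> hd xs = i \<and> last xs = j \<and> length xs \<le> length ys"
  shows "graph_dist n E i j = graph_dist n' E' i' j'"
proof -
  define P where "P l \<longleftrightarrow> (\<exists>xs. is_walk n E xs \<and> hd xs = i \<and> last xs = j \<and> length xs = Suc l)" for l
  define Q where "Q l \<longleftrightarrow> (\<exists>ys. is_walk n' E' ys \<and> hd ys = i' \<and> last ys = j' \<and> length ys = Suc l)" for l
  have PQ: "\<exists>l'\<le>l. Q l'" if Pl: "P l" for l
  proof -
    obtain xs where "is_walk n E xs" "hd xs = i" "last xs = j" "length xs = Suc l"
      using Pl unfolding P_def by blast
    with to' obtain ys where "is_walk n' E' ys" "hd ys = i'" "last ys = j'" "length ys \<le> Suc l"
      by force
    then show ?thesis unfolding Q_def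
      by (intro exI[of _ "length ys - 1"]) (auto simp: is_walk_def)
  qed
  have QP: "\<exists>l'\<le>l. P l'" if Ql: "Q l" for l
  proof -
    obtain ys where "is_walk n' E' ys" "hd ys = i'" "last ys = j'" "length ys = Suc l"
      using Ql unfolding Q_def by blast
    with from' obtain xs where "is_walk n E xs" "hd xs = i" "last xs = j" "length xs \<le> Suc l"
      by force
    then show ?thesis unfolding P_def
      by (intro exI[of _ "length xs - 1"]) (auto simp: is_walk_def)
  qed
  have "Least P = Least Q"
  proof (cases "\<exists>l. P l")
    case True
    then have "P (Least P)" "Q (Least Q)" using PQ by (metis LeastI)+
    then show ?thesis using PQ QP by (metis Least_le le_trans antisym)
  next
    case False
    then have "P = Q" using QP by (auto simp: fun_eq_iff)
    then show ?thesis by simp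
  qed
  then show ?thesis unfolding graph_dist_def P_def Q_def .
qed

lemma graph_dist_refl: "i < n \<Longrightarrow> graph_dist n E i i = 0"
  unfolding graph_dist_def
  by (rule Least_eq_0, rule exI[of _ "[i]"]) (auto simp: is_walk_def)

lemma graph_dist_sym:
  assumes "\<And>i j. E i j \<Longrightarrow> E j i"
  shows "graph_dist n E i j = graph_dist n E j i"
proof -
  have rev_walk: "is_walk n E (rev xs)" if "is_walk n E xs" for xs
    using that assms unfolding is_walk_iff_successively
    by (auto elim: successively_mono)
  show ?thesis
    by (rule graph_dist_eqI; use rev_walk in \<open>force simp: hd_rev last_rev\<close>)
qed

lemma graph_dist_automorphism:
  assumes "\<And>x. s (s x) = x" and "\<And>x. x < n \<Longrightarrow> s x < n" and "\<And>a b. E (s a) (s b) = E a b"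
  shows "graph_dist n E (s i) (s j) = graph_dist n E i j"
proof -
  have map_walk: "is_walk n E (map s xs)" if "is_walk n E xs" for xs
    using that assms unfolding is_walk_iff_successively by (auto simp: successively_map)
  show ?thesis
  proof (rule graph_dist_eqI)
    fix xs assume "is_walk n E xs" "hd xs = s i" "last xs = s j"
    then show "\<exists>ys. is_walk n E ys \<and> hd ys = i \<and> last ys = j \<and> length ys \<le> length xs"
      using map_walk assms(1) by (intro exI[of _ "map s xs"]) (auto simp: hd_map last_map is_walk_def)
  next
    fix ys assume "is_walk n E ys" "hd ys = i" "last ys = j"
    then show "\<exists>xs. is_walk n E xs \<and> hd xs = s i \<and> last xs = s j \<and> length xs \<le> length ys"
      using map_walk by (intro exI[of _ "map s ys"]) (auto simp: hd_map last_map is_walk_def)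
  qed
qed

lemma graph_dist_eq_2I:
  assumes "p \<noteq> q" "\<not> E p q" "E p v" "E v q" "p < n" "v < n" "q < n"
  shows "graph_dist n E p q = 2"
  unfolding graph_dist_def
proof (rule Least_equality)
  show "\<exists>xs. is_walk n E xs \<and> hd xs = p \<and> last xs = q \<and> length xs = Suc 2"
    using assms by (intro exI[of _ "[p, v, q]"]) (auto simp: is_walk_iff_successively)
next
  fix l assume "\<exists>xs. is_walk n E xs \<and> hd xs = p \<and> last xs = q \<and> length xs = Suc l"
  then obtain xs where xs: "is_walk n E xs" "hd xs = p" "last xs = q" "length xs = Suc l"
    by blast
  show "2 \<le> l"
  proof (rule ccontr)
    assume "\<not> 2 \<le> l"
    then have "l = 0 \<or> l = 1" by linarith
    then consider "xs = [p]" | "xs = [p, q]"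
      using xs(2-4) by (auto simp: length_Suc_conv)
    then show False
      by cases (use xs(1,3) assms(1,2) in \<open>auto simp: is_walk_iff_successively\<close>)
  qed
qed

lemma add_pendants_sym:
  "(\<And>i j. E i j \<Longrightarrow> E j i) \<Longrightarrow> add_pendants m E w k i j \<Longrightarrow> add_pendants m E w k j i"
  unfolding add_pendants_def by auto

lemma add_pendants_walk_projection:
  assumes w: "w < m" and xs: "is_walk (m + k) (add_pendants m E w k) xs"
  defines "f \<equiv> \<lambda>v. if v < m then v else w"
  shows "is_walk m E (remdups_adj (map f xs))"
proof -
  have "successively (\<lambda>a b. a = b \<or> E a b) (map f xs)"
    using xs unfolding is_walk_iff_successively successively_map
    by (auto simp: f_def add_pendants_def elim!: successively_mono)
  then have "successively (\<lambda>a b. a = b \<or> E a b) (remdups_adj (map f xs))"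
    by (rule successively_remdups_adjI)
  moreover have "successively (\<noteq>) (remdups_adj (map f xs))"
    using distinct_adj_remdups_adj unfolding distinct_adj_def .
  ultimately have "successively E (remdups_adj (map f xs))"
    unfolding successively_conv_nth by blast
  then show ?thesis
    using xs w unfolding is_walk_iff_successively by (auto simp: f_def)
qed

lemma graph_dist_add_pendants_base:
  assumes w: "w < m" and "i < m" "j < m"
  shows "graph_dist (m + k) (add_pendants m E w k) i j = graph_dist m E i j"
proof (rule graph_dist_eqI)
  fix xs assume xs: "is_walk (m + k) (add_pendants m E w k) xs" "hd xs = i" "last xs = j"
  define f where "f = (\<lambda>v. if v < m then v else w)"
  have "xs \<noteq> []"
    using xs(1) by (simp add: is_walk_def)
  then show "\<exists>ys. is_walk m E ys \<and> hd ys = i \<and> last ys = j \<and> length ys \<le> length xs"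
    using add_pendants_walk_projection[OF w xs(1)] xs(2,3) assms(2,3) remdups_adj_length[of "map f xs"]
    by (intro exI[of _ "remdups_adj (map f xs)"]) (auto simp: f_def hd_map last_map)
next
  fix ys assume "is_walk m E ys" "hd ys = i" "last ys = j"
  moreover have "is_walk (m + k) (add_pendants m E w k) ys"
    using \<open>is_walk m E ys\<close> unfolding is_walk_iff_successively
    by (auto simp: add_pendants_def elim!: successively_mono)
  ultimately show "\<exists>xs. is_walk (m + k) (add_pendants m E w k) xs \<and> hd xs = i \<and> last xs = j
      \<and> length xs \<le> length ys"
    by blast
qed

lemma graph_dist_add_pendants_pendants:
  assumes "w < m" "m \<le> p" "p < m + k" "m \<le> q" "q < m + k" "p \<noteq> q"
  shows "graph_dist (m + k) (add_pendants m E w k) p q = 2"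
  using assms by (intro graph_dist_eq_2I[where v = w]) (auto simp: add_pendants_def)

lemma graph_dist_add_pendants_swap:
  assumes w: "w < m" and i: "i < m" and p: "m \<le> p" "p < m + k" and q: "m \<le> q" "q < m + k"
  shows "graph_dist (m + k) (add_pendants m E w k) i p = graph_dist (m + k) (add_pendants m E w k) i q"
proof -
  define s where "s x = (if x = p then q else if x = q then p else x)" for x
  have "graph_dist (m + k) (add_pendants m E w k) (s i) (s q) = graph_dist (m + k) (add_pendants m E w k) i q"
    by (rule graph_dist_automorphism) (use p q w in \<open>auto simp: s_def add_pendants_def\<close>)
  moreover have "s i = i" "s q = p"
    using i p q unfolding s_def by auto
  ultimately show ?thesis by simp
qed

lemma dist_sq_matrix_add_pendants:
  fixes m k w :: nat
  assumes sym: "\<And>i j. E i j \<Longrightarrow> E j i" and w: "w < m"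
  defines "G \<equiv> add_pendants m E w k"
  defines "b \<equiv> vec m (\<lambda>i. (real (graph_dist (m + k) G i m))\<^sup>2)"
  shows "dist_sq_matrix (m + k) G = pendant_block_mat (dist_sq_matrix m E) b k 4"
proof (rule eq_matI)
  fix i j assume "i < dim_row (pendant_block_mat (dist_sq_matrix m E) b k 4)"
    "j < dim_col (pendant_block_mat (dist_sq_matrix m E) b k 4)"
  then have i: "i < m + k" and j: "j < m + k"
    by (auto simp: pendant_block_mat_def dist_sq_matrix_def)
  have to_pendant: "graph_dist (m + k) G a p = graph_dist (m + k) G a m" if "a < m" "m \<le> p" "p < m + k" for a p
    unfolding G_def using that w by (intro graph_dist_add_pendants_swap) auto
  have "graph_dist (m + k) G i j = graph_dist (m + k) G j i"
    unfolding G_def by (rule graph_dist_sym[OF add_pendants_sym[OF sym]])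
  then have "graph_dist (m + k) G i j = (if i < m \<and> j < m then graph_dist m E i j
      else if i < m then graph_dist (m + k) G i m else if j < m then graph_dist (m + k) G j m
      else if i = j then 0 else 2)"
    using i j w to_pendant[of i j] to_pendant[of j i]
    by (auto simp: G_def graph_dist_add_pendants_base graph_dist_add_pendants_pendants graph_dist_refl)
  then show "dist_sq_matrix (m + k) G $$ (i, j) = pendant_block_mat (dist_sq_matrix m E) b k 4 $$ (i, j)"
    using i j by (auto simp: pendant_block_mat_def dist_sq_matrix_def b_def)
qed (auto simp: pendant_block_mat_def dist_sq_matrix_def)

theorem corollary3p2:
  fixes m k w :: nat and E' :: "nat \<Rightarrow> nat \<Rightarrow> bool"
  assumes "connected_graph m E'" and "w < m" and "k \<ge> 2"
  shows "neg_inertia (dist_sq_matrix (m + k) (add_pendants m E' w k))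
           = k - 1 + neg_inertia (dist_sq_matrix m E')
       \<or> neg_inertia (dist_sq_matrix (m + k) (add_pendants m E' w k))
           = k + neg_inertia (dist_sq_matrix m E')"
proof -
  \<comment> \<open>Only the symmetry of \<open>E'\<close> is used: unreachable pairs get the junk distance 0.\<close>
  have sym: "\<And>i j. E' i j \<Longrightarrow> E' j i"
    using assms(1) unfolding connected_graph_def simple_graph_def by blast
  let ?\<Delta>' = "dist_sq_matrix m E'"
  let ?b = "vec m (\<lambda>i. (real (graph_dist (m + k) (add_pendants m E' w k) i m))\<^sup>2)"
  have \<Delta>': "?\<Delta>' \<in> carrier_mat m m" "transpose_mat ?\<Delta>' = ?\<Delta>'"
    by (auto simp: dist_sq_matrix_def graph_dist_sym[OF sym])
  have \<Delta>: "dist_sq_matrix (m + k) (add_pendants m E' w k) = pendant_block_mat ?\<Delta>' ?b k 4"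
    using dist_sq_matrix_add_pendants[OF sym assms(2)] by simp
  have "neg_inertia ?\<Delta>' + (k - 1) \<le> neg_inertia (pendant_block_mat ?\<Delta>' ?b k 4)"
    by (rule neg_inertia_pendant_block_ge[OF \<Delta>']) auto
  moreover have "neg_inertia (pendant_block_mat ?\<Delta>' ?b k 4) \<le> neg_inertia ?\<Delta>' + k"
    by (rule neg_inertia_pendant_block_le[OF \<Delta>']) simp
  ultimately show ?thesis
    unfolding \<Delta> using assms(3) by linarith
qed

end
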